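(* Consider the parametrized system $A\,(c\circ x^B)=0$ with $\ell$ classes as in the context, and assume: (i) $\ker A\cap\mathbb{R}^m_{>0}\neq\emptyset$; (ii) $d=d_1+\cdots+d_\ell$; (iii) for every $j=1,\dots,\ell$: $d_j=\dim P_j\le1$, and if $d_j=1$ then $\sum_{i'=1}^{i}\tilde b^j_{i'}\ge0$ for all $i=1,\dots,\omega_j-1$ (or $\le0$ for all such $i$) and $\tilde b^j_1\cdot\tilde b^j_{\omega_j}<0$. Then $|Y_c|=1$ for all $c\in\mathbb{R}^m_{>0}$.
   Context: Notation: for $x\in\mathbb{R}^n_{>0}$ and $y\in\mathbb{R}^n$, $x^y=\prod_i x_i^{y_i}$; for $B=(b^1,\dots,b^m)$, $x^B$ has entries $x^{b^j}$; $\circ$ is the componentwise product; $(\cdot)^{-1}$ of a positive vector is componentwise; $1_k$ is the all-ones vector in $\mathbb{R}^k$. Setting with classes: $A=(A_1\ \cdots\ A_\ell)\in\mathbb{R}^{l\times m}$ with blocks $A_j\in\mathbb{R}^{l\times m_j}$, $m_1+\cdots+m_\ell=m$, such that $\ker A=\ker A_1\times\cdots\times\ker A_\ell$; correspondingly $B=(B_1\ \cdots\ B_\ell)\in\mathbb{R}^{n\times m}$ with $B_j\in\mathbb{R}^{n\times m_j}$ and $c=(c^1,\dots,c^\ell)$ with $c^j\in\mathbb{R}^{m_j}_{>0}$. For each $j$, $P_j=\{y\in\ker A_j\cap\mathbb{R}^{m_j}_{>0}: 1_{m_j}\cdot y=1\}$ and the coefficient polytope is $P=P_1\times\cdots\times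 P_\ell$. Let $J\in\mathbb{R}^{\ell\times m}$ be block diagonal with diagonal blocks $1_{m_j}^{\mathsf T}$. The monomial dependency subspace is $D=\ker\begin{pmatrix}B\\ J\end{pmatrix}\subseteq\mathbb{R}^m$, $d=\dim D$, and $d_j=\dim\ker\begin{pmatrix}B_j\\ 1_{m_j}^{\mathsf T}\end{pmatrix}$. The solution set on the coefficient polytope is $Y_c=\{y\in P: y^z=c^z\text{ for all }z\in D\}$. For $j$ with $\dim P_j=1$: let $y^{j,1},y^{j,2}$ be the endpoints of the segment $\overline{P_j}=\{y\in\ker A_j\cap\mathbb{R}^{m_j}_{\ge0}:1_{m_j}\cdot y=1\}$, $q^j=(y^{j,1}-y^{j,2})\circ(y^{j,1}+y^{j,2})^{-1}$, indices reordered so that $1=q^j_1\ge\cdots\ge q^j_{m_j}=-1$, and $I^j_1,\dots,I^j_{\omega_j}$ the equivalence classes of equal consecutive components of $q^j$ (in decreasing order of the common value). For $j$ with $d_j=1$: $b^j\in\mathbb{R}^{m_j}$ spans $\ker\begin{pmatrix}B_j\\ 1_{m_j}^{\mathsf T}\end{pmatrix}$ and $\tilde b^j\in\mathbb{R}^{\omega_j}$ has entries $\tilde b^j_i=\sum_{i'\in I^j_i}b^j_{i'}$. *)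

theory Defs
  imports "HOL-Analysis.Analysis"
begin

text \<open>Vectors in R^m are modelled as real^'m; the class of an index i is cl i :: 'k,
  where 'k is the finite type of the l classes. Blocks R^{m_j} are embedded into R^m
  as the vectors supported on class j.\<close>

definition restr :: "('m::finite \<Rightarrow> 'k) \<Rightarrow> 'k \<Rightarrow> real^'m \<Rightarrow> real^'m" where
  "restr cl j y = (\<chi> i. if cl i = j then y $ i else 0)"

definition blockvecs :: "('m::finite \<Rightarrow> 'k) \<Rightarrow> 'k \<Rightarrow> (real^'m) set" where
  "blockvecs cl j = {y. \<forall>i. cl i \<noteq> j \<longrightarrow> y $ i = 0}"

definition Pj :: "real^'m^'l \<Rightarrow> ('m::finite \<Rightarrow> 'k) \<Rightarrow> 'k \<Rightarrow> (real^'m) set" where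
  "Pj A cl j = {y \<in> blockvecs cl j. A *v y = 0 \<and> (\<forall>i. cl i = j \<longrightarrow> 0 < y $ i)
                 \<and> (\<Sum>i\<in>{i. cl i = j}. y $ i) = 1}"

definition Pbar :: "real^'m^'l \<Rightarrow> ('m::finite \<Rightarrow> 'k) \<Rightarrow> 'k \<Rightarrow> (real^'m) set" where
  "Pbar A cl j = {y \<in> blockvecs cl j. A *v y = 0 \<and> (\<forall>i. cl i = j \<longrightarrow> 0 \<le> y $ i)
                 \<and> (\<Sum>i\<in>{i. cl i = j}. y $ i) = 1}"

definition coeff_polytope :: "real^'m^'l \<Rightarrow> ('m::finite \<Rightarrow> 'k) \<Rightarrow> (real^'m) set" where
  "coeff_polytope A cl = {y. \<forall>j. restr cl j y \<in> Pj A cl j}"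

definition Dsp :: "real^'m^'n \<Rightarrow> ('m::finite \<Rightarrow> 'k) \<Rightarrow> (real^'m) set" where
  "Dsp B cl = {z. B *v z = 0 \<and> (\<forall>j. (\<Sum>i\<in>{i. cl i = j}. z $ i) = 0)}"

text \<open>ker (B_j; 1^T) embedded; d_j is its dimension.\<close>
definition Kj :: "real^'m^'n \<Rightarrow> ('m::finite \<Rightarrow> 'k) \<Rightarrow> 'k \<Rightarrow> (real^'m) set" where
  "Kj B cl j = {z \<in> blockvecs cl j. B *v z = 0 \<and> (\<Sum>i\<in>{i. cl i = j}. z $ i) = 0}"

definition monom :: "real^'m \<Rightarrow> real^'m \<Rightarrow> real" where
  "monom x y = (\<Prod>i\<in>UNIV. (x $ i) powr (y $ i))"

definition Ysol :: "real^'m^'l \<Rightarrow> real^'m^'n \<Rightarrow> ('m::finite \<Rightarrow> 'k) \<Rightarrow> real^'m \<Rightarrow> (real^'m) set" where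
  "Ysol A B cl c = {y \<in> coeff_polytope A cl. \<forall>z\<in>Dsp B cl. monom y z = monom c z}"

text \<open>Sign condition of (iii) for class j, given endpoints y1, y2 of the segment and
  a spanning vector b. Indices are 0-based: vs lists the distinct values of q^j in
  decreasing order (so vs!i is the common value on I^j_(i+1)), omega = length vs,
  bt i = tilde b^j_(i+1).\<close>
definition sign_cond :: "('m::finite \<Rightarrow> 'k) \<Rightarrow> 'k \<Rightarrow> real^'m \<Rightarrow> real^'m \<Rightarrow> real^'m \<Rightarrow> bool" where
  "sign_cond cl j y1 y2 b =
    (let q = (\<lambda>k. (y1 $ k - y2 $ k) / (y1 $ k + y2 $ k));
         vs = rev (sorted_list_of_set (q ` {k. cl k = j}));
         \<omega> = length vs;
         bt = (\<lambda>i. \<Sum>k\<in>{k. cl k = j \<and> q k = vs ! i}. b $ k)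
     in ((\<forall>i < \<omega> - 1. 0 \<le> (\<Sum>i'\<le>i. bt i')) \<or> (\<forall>i < \<omega> - 1. (\<Sum>i'\<le>i. bt i') \<le> 0))
        \<and> bt 0 * bt (\<omega> - 1) < 0)"

end

theory Submission
  imports Defs
begin

text \<open>
  Each \<open>P\<^sub>j\<close> is a point (\<open>d\<^sub>j = 0\<close>) or an open segment whose closure has endpoints
  \<open>y\<^sub>1, y\<^sub>2\<close> (\<open>d\<^sub>j = 1\<close>), and by (ii) the spaces \<open>K\<^sub>j\<close>, which live on disjoint blocks, span
  \<open>D\<close>. So \<open>y \<in> Y\<^sub>c\<close> decouples into one equation per class with \<open>d\<^sub>j = 1\<close>: the function
  \<open>F(t) = \<Sum>\<^sub>k b\<^sub>k ln((1 - t) y\<^sub>1\<^sub>k + t y\<^sub>2\<^sub>k)\<close> must take a prescribed value, where \<open>b\<close> spans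
  \<open>K\<^sub>j\<close>. Grouping the coordinates by the value of \<open>q = (y\<^sub>1 - y\<^sub>2)/(y\<^sub>1 + y\<^sub>2)\<close> into
  weights \<open>w\<^sub>i\<close> (the paper's \<open>b\<close>-tilde) gives \<open>F'(t) = -2 \<Sum>\<^sub>i w\<^sub>i \<phi>(v\<^sub>i)\<close> with \<open>\<phi>\<close>
  increasing and the values \<open>v\<^sub>i\<close> decreasing, so summation by parts and the sign condition of
  (iii) make \<open>F\<close> strictly monotone. Each endpoint has a vanishing coordinate and the first and
  last weights have opposite signs, so \<open>F\<close> runs from \<open>+\<infinity>\<close> to \<open>-\<infinity>\<close> or back: every class
  has exactly one solution.
\<close>

section \<open>Real analysis\<close>

lemma summation_by_parts:
  fixes w f :: "nat \<Rightarrow> real"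
  shows "(\<Sum>i<Suc m. w i * f i) =
    (\<Sum>i<m. (\<Sum>i'\<le>i. w i') * (f i - f (Suc i))) + (\<Sum>i\<le>m. w i) * f m"
  by (induction m) (auto simp: algebra_simps)

lemma sum_mult_strict_decreasing_pos:
  fixes w f :: "nat \<Rightarrow> real"
  assumes "0 < n" and total: "(\<Sum>i<n. w i) = 0"
    and partial: "\<And>i. i < n - 1 \<Longrightarrow> 0 \<le> (\<Sum>i'\<le>i. w i')" and first: "0 < w 0"
    and decreasing: "\<And>i. Suc i < n \<Longrightarrow> f (Suc i) < f i"
  shows "0 < (\<Sum>i<n. w i * f i)"
proof -
  obtain m where n: "n = Suc m" using \<open>0 < n\<close> gr0_implies_Suc by blast
  have "m \<noteq> 0" using total first by (cases m) (auto simp: n)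
  have "(\<Sum>i<n. w i * f i) = (\<Sum>i<m. (\<Sum>i'\<le>i. w i') * (f i - f (Suc i)))"
    using summation_by_parts[of w f m] total by (simp add: n lessThan_Suc_atMost)
  also have "0 < \<dots>"
  proof (rule sum_pos2[where i = 0])
    show "0 < (\<Sum>i'\<le>0. w i') * (f 0 - f (Suc 0))"
      using first decreasing[of 0] \<open>m \<noteq> 0\<close> by (simp add: n)
    show "0 \<le> (\<Sum>i'\<le>i. w i') * (f i - f (Suc i))" if "i \<in> {..<m}" for i
      using partial[of i] decreasing[of i] that by (simp add: n less_imp_le)
  qed (use \<open>m \<noteq> 0\<close> in auto)
  finally show ?thesis .
qed

lemma convex_combination_pos:
  fixes a c u :: real
  assumes "0 \<le> a" "0 \<le> c" "0 < a + c" "0 < u" "u < 1"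
  shows "0 < (1 - u) * a + u * c"
  using assms by (cases "a = 0") (auto intro: add_pos_nonneg add_nonneg_pos)

lemma moebius_strict_mono:
  fixes u v w :: real
  assumes "\<bar>u\<bar> < 1" "-1 \<le> w" "w < v" "v \<le> 1"
  shows "w / (1 + u * w) < v / (1 + u * v)"
proof -
  have "0 < 1 + u * x" if "\<bar>x\<bar> \<le> 1" for x
  proof -
    have "\<bar>u * x\<bar> < 1"
      using assms(1) mult_left_le[OF that, of "\<bar>u\<bar>"] by (simp add: abs_mult)
    then show ?thesis by linarith
  qed
  then have "0 < 1 + u * w" "0 < 1 + u * v" using assms by auto
  moreover have "w * (1 + u * v) < v * (1 + u * w)" using assms by (simp add: algebra_simps)
  ultimately show ?thesis by (simp add: divide_simps)
qed

lemma IVT_at_top_at_bot: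
  fixes f :: "real \<Rightarrow> real"
  assumes "a < b" and cont: "continuous_on {a<..<b} f"
    and left: "filterlim f at_top (at_right a)" and right: "filterlim f at_bot (at_left b)"
  shows "\<exists>t. a < t \<and> t < b \<and> f t = C"
proof -
  define m where "m = (a + b) / 2"
  have m: "a < m" "m < b" using \<open>a < b\<close> by (auto simp: m_def)
  have "\<forall>\<^sub>F t in at_right a. C \<le> f t" using left by (simp add: filterlim_at_top)
  then obtain e where "a < e" and e: "\<And>t. a < t \<Longrightarrow> t < e \<Longrightarrow> C \<le> f t"
    unfolding eventually_at_right_field by blast
  define t0 where "t0 = (a + min e m) / 2"
  have t0: "a < t0" "t0 < m" "C \<le> f t0"
    using \<open>a < e\<close> m e[of t0] by (auto simp: t0_def)
  have "\<forall>\<^sub>F t in at_left b. f t \<le> C" using right by (simp add: filterlim_at_bot)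
  then obtain e' where "e' < b" and e': "\<And>t. e' < t \<Longrightarrow> t < b \<Longrightarrow> f t \<le> C"
    unfolding eventually_at_left_field by blast
  define t1 where "t1 = (b + max e' m) / 2"
  have t1: "m < t1" "t1 < b" "f t1 \<le> C"
    using \<open>e' < b\<close> m e'[of t1] by (auto simp: t1_def)
  have "continuous_on {t0..t1} f"
    by (rule continuous_on_subset[OF cont]) (use t0 t1 in auto)
  then obtain t where "t0 \<le> t" "t \<le> t1" "f t = C"
    using IVT2'[of f t1 C t0] t0 t1 by auto
  then show ?thesis using t0 t1 by (intro exI[of _ t]) auto
qed

lemma log_combination_at_right_0:
  fixes a c b :: "'a \<Rightarrow> real"
  assumes "finite K" and a_nonneg: "\<And>k. k \<in> K \<Longrightarrow> 0 \<le> a k"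
    and pos: "\<And>k. k \<in> K \<Longrightarrow> 0 < a k + c k"
    and neg: "(\<Sum>k\<in>{k\<in>K. a k = 0}. b k) < 0"
  shows "filterlim (\<lambda>t. \<Sum>k\<in>K. b k * ln ((1 - t) * a k + t * c k)) at_top (at_right 0)"
proof -
  define K0 where "K0 = {k\<in>K. a k = 0}"
  define G where
    "G = (\<lambda>t. (\<Sum>k\<in>K - K0. b k * ln ((1 - t) * a k + t * c k)) + (\<Sum>k\<in>K0. b k * ln (c k)))"
  have split: "(\<Sum>k\<in>K. b k * ln ((1 - t) * a k + t * c k)) = G t + (\<Sum>k\<in>K0. b k) * ln t"
    if "0 < t" for t
  proof -
    have "b k * ln ((1 - t) * a k + t * c k) = b k * ln (c k) + b k * ln t" if "k \<in> K0" for k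
      using that pos[of k] \<open>0 < t\<close> by (simp add: K0_def ln_mult algebra_simps)
    then have "(\<Sum>k\<in>K0. b k * ln ((1 - t) * a k + t * c k)) =
        (\<Sum>k\<in>K0. b k * ln (c k)) + (\<Sum>k\<in>K0. b k) * ln t"
      by (simp add: sum.distrib sum_distrib_right)
    moreover have "K0 \<subseteq> K" by (auto simp: K0_def)
    ultimately show ?thesis
      using \<open>finite K\<close> by (simp add: G_def sum.subset_diff[of K0 K])
  qed
  have "(G \<longlongrightarrow> G 0) (at_right 0)"
  proof -
    have "0 < a k" if "k \<in> K - K0" for k using a_nonneg[of k] that by (auto simp: K0_def)
    then show ?thesis unfolding G_def by (auto simp: K0_def intro!: tendsto_eq_intros)
  qed
  moreover have "filterlim (\<lambda>t. (\<Sum>k\<in>K0. b k) * ln t) at_top (at_right 0)"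
    using filterlim_tendsto_neg_mult_at_top_iff[OF tendsto_const, of "\<Sum>k\<in>K0. b k" ln] neg ln_at_0
    by (simp add: K0_def)
  ultimately have lim: "filterlim (\<lambda>t. G t + (\<Sum>k\<in>K0. b k) * ln t) at_top (at_right 0)"
    by (rule filterlim_tendsto_add_at_top)
  have "\<forall>\<^sub>F t in at_right 0. G t + (\<Sum>k\<in>K0. b k) * ln t = (\<Sum>k\<in>K. b k * ln ((1 - t) * a k + t * c k))"
    using split by (auto simp: eventually_at_right_field intro: exI[of _ 1])
  from filterlim_cong[OF refl refl this] lim show ?thesis by simp
qed

section \<open>Grouping a finite sum by the values of a function\<close>

text \<open>\<open>level_values q K\<close> lists the distinct values of \<open>q\<close> on \<open>K\<close> in decreasing order; for
  \<open>q = q\<^sup>j\<close>, entry \<open>i\<close> is the common value on the paper's \<open>I\<^sup>j\<^sub>i\<^sub>+\<^sub>1\<close>, and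
  \<open>level_weight q K b i\<close> is entry \<open>i + 1\<close> of its \<open>b\<close>-tilde.\<close>

definition level_values :: "('a \<Rightarrow> real) \<Rightarrow> 'a set \<Rightarrow> real list" where
  "level_values q K = rev (sorted_list_of_set (q ` K))"

definition level_weight :: "('a \<Rightarrow> real) \<Rightarrow> 'a set \<Rightarrow> ('a \<Rightarrow> real) \<Rightarrow> nat \<Rightarrow> real" where
  "level_weight q K b i = (\<Sum>k\<in>{k\<in>K. q k = level_values q K ! i}. b k)"

lemma level_weight_uminus: "level_weight q K (\<lambda>k. - b k) i = - level_weight q K b i"
  by (simp add: level_weight_def sum_negf)

lemma set_level_values: "finite K \<Longrightarrow> set (level_values q K) = q ` K"
  by (simp add: level_values_def)

lemma level_values_strict_decreasing:
  assumes "i < i'" "i' < length (level_values q K)"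
  shows "level_values q K ! i' < level_values q K ! i"
proof -
  define sl where "sl = sorted_list_of_set (q ` K)"
  define n where "n = length sl"
  have "level_values q K ! i = sl ! (n - Suc i)" "level_values q K ! i' = sl ! (n - Suc i')"
    using assms by (auto simp: level_values_def sl_def n_def rev_nth)
  moreover have "sl ! (n - Suc i') < sl ! (n - Suc i)"
    using sorted_wrt_nth_less[OF strict_sorted_list_of_set[of "q ` K"]] assms
    by (simp add: sl_def n_def level_values_def)
  ultimately show ?thesis by simp
qed

lemma level_values_first:
  assumes "finite K" "k \<in> K" "\<And>k'. k' \<in> K \<Longrightarrow> q k' \<le> q k"
  shows "level_values q K ! 0 = q k"
proof -
  obtain i where i: "i < length (level_values q K)" "level_values q K ! i = q k"
    using assms by (metis image_eqI in_set_conv_nth set_level_values)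
  have "level_values q K ! 0 \<in> q ` K"
    using i assms(1) by (metis gr_zeroI not_less0 nth_mem set_level_values)
  then show ?thesis
    using i assms level_values_strict_decreasing[of 0 i q K] by (cases "i = 0") force+
qed

lemma level_values_last:
  assumes "finite K" "k \<in> K" "\<And>k'. k' \<in> K \<Longrightarrow> q k \<le> q k'"
  shows "level_values q K ! (length (level_values q K) - 1) = q k"
proof -
  define n where "n = length (level_values q K)"
  obtain i where i: "i < n" "level_values q K ! i = q k"
    using assms by (metis image_eqI in_set_conv_nth set_level_values n_def)
  have "n - 1 < n" using i by simp
  then have "level_values q K ! (n - 1) \<in> q ` K"
    using nth_mem set_level_values[OF assms(1)] unfolding n_def by metis
  then show ?thesis
    using i assms level_values_strict_decreasing[of i "n - 1" q K]
    by (cases "i = n - 1") (force simp: n_def)+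
qed

lemma sum_by_levels:
  assumes "finite K"
  shows "(\<Sum>k\<in>K. b k * \<phi> (q k)) =
    (\<Sum>i<length (level_values q K). level_weight q K b i * \<phi> (level_values q K ! i))"
proof -
  define f where "f = (\<lambda>v. (\<Sum>k\<in>{k\<in>K. q k = v}. b k) * \<phi> v)"
  have "(\<Sum>k\<in>K. b k * \<phi> (q k)) = (\<Sum>v\<in>q ` K. \<Sum>k\<in>{k\<in>K. q k = v}. b k * \<phi> (q k))"
    by (rule sum.image_gen[OF assms])
  also have "\<dots> = (\<Sum>v\<in>set (level_values q K). f v)"
    unfolding f_def set_level_values[OF assms] by (rule sum.cong) (auto simp: sum_distrib_right)
  also have "\<dots> = sum_list (map f (level_values q K))"
    by (rule sum.distinct_set_conv_list) (simp add: level_values_def)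
  also have "\<dots> = (\<Sum>i<length (level_values q K). f (level_values q K ! i))"
    by (simp add: sum_list_sum_nth atLeast0LessThan)
  finally show ?thesis by (simp add: f_def level_weight_def)
qed

section \<open>Logarithmic sums along a segment\<close>

definition normalized_difference :: "('a \<Rightarrow> real) \<Rightarrow> ('a \<Rightarrow> real) \<Rightarrow> 'a \<Rightarrow> real" where
  "normalized_difference y1 y2 k = (y1 k - y2 k) / (y1 k + y2 k)"

lemma log_derivative_normalized_difference:
  fixes a c t :: real
  assumes "0 < a + c" "0 < (1 - t) * a + t * c"
  shows "(c - a) / ((1 - t) * a + t * c) =
    -2 * (((a - c) / (a + c)) / (1 + (1 - 2 * t) * ((a - c) / (a + c))))"
proof -
  define s where "s = a + c"
  define Y where "Y = (1 - t) * a + t * c"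
  have "s \<noteq> 0" "Y \<noteq> 0" using assms by (auto simp: s_def Y_def)
  have "1 + (1 - 2 * t) * ((a - c) / s) = 2 * Y / s"
    using \<open>s \<noteq> 0\<close> by (simp add: field_simps Y_def s_def)
  then have "((a - c) / s) / (1 + (1 - 2 * t) * ((a - c) / s)) = (a - c) / (2 * Y)"
    using \<open>s \<noteq> 0\<close> \<open>Y \<noteq> 0\<close> by (simp add: field_simps)
  moreover have "(c - a) / Y = -2 * ((a - c) / (2 * Y))"
    using \<open>Y \<noteq> 0\<close> by (simp add: field_simps)
  ultimately show ?thesis by (simp only: Y_def s_def)
qed

locale log_segment =
  fixes K :: "'a set" and y1 y2 b :: "'a \<Rightarrow> real"
  assumes finite_K: "finite K"
    and nonneg: "\<And>k. k \<in> K \<Longrightarrow> 0 \<le> y1 k \<and> 0 \<le> y2 k"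
    and pos_sum: "\<And>k. k \<in> K \<Longrightarrow> 0 < y1 k + y2 k"
    and y1_vanishes: "\<exists>k\<in>K. y1 k = 0" and y2_vanishes: "\<exists>k\<in>K. y2 k = 0"
    and weights_sum_zero: "(\<Sum>k\<in>K. b k) = 0"
    and partial_sums_nonneg: "\<And>i. i < length (level_values (normalized_difference y1 y2) K) - 1 \<Longrightarrow>
      0 \<le> (\<Sum>i'\<le>i. level_weight (normalized_difference y1 y2) K b i')"
    and first_weight_pos: "0 < level_weight (normalized_difference y1 y2) K b 0"
    and last_weight_neg: "level_weight (normalized_difference y1 y2) K b
      (length (level_values (normalized_difference y1 y2) K) - 1) < 0"
begin

abbreviation q :: "'a \<Rightarrow> real" where "q \<equiv> normalized_difference y1 y2"

abbreviation n :: nat where "n \<equiv> length (level_values q K)"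

definition log_sum :: "real \<Rightarrow> real" where
  "log_sum t = (\<Sum>k\<in>K. b k * ln ((1 - t) * y1 k + t * y2 k))"

lemma q_bounds: "k \<in> K \<Longrightarrow> -1 \<le> q k \<and> q k \<le> 1"
  using nonneg pos_sum by (simp add: normalized_difference_def divide_simps)

lemma q_eq_1_iff: "k \<in> K \<Longrightarrow> q k = 1 \<longleftrightarrow> y2 k = 0"
  using pos_sum[of k] by (auto simp: normalized_difference_def divide_eq_eq)

lemma q_eq_minus_1_iff: "k \<in> K \<Longrightarrow> q k = -1 \<longleftrightarrow> y1 k = 0"
  using pos_sum[of k] by (auto simp: normalized_difference_def divide_eq_eq)

lemma weight_y2_vanishing: "(\<Sum>k\<in>{k\<in>K. y2 k = 0}. b k) = level_weight q K b 0"
proof -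
  obtain k where k: "k \<in> K" "y2 k = 0" using y2_vanishes by blast
  then have "q k = 1" using q_eq_1_iff by simp
  then have "level_values q K ! 0 = 1"
    using level_values_first[OF finite_K k(1), of q] q_bounds by simp
  then show ?thesis unfolding level_weight_def by (intro sum.cong) (auto simp: q_eq_1_iff)
qed

lemma weight_y1_vanishing: "(\<Sum>k\<in>{k\<in>K. y1 k = 0}. b k) = level_weight q K b (n - 1)"
proof -
  obtain k where k: "k \<in> K" "y1 k = 0" using y1_vanishes by blast
  then have "q k = -1" using q_eq_minus_1_iff by simp
  then have "level_values q K ! (n - 1) = -1"
    using level_values_last[OF finite_K k(1), of q] q_bounds by simp
  then show ?thesis unfolding level_weight_def by (intro sum.cong) (auto simp: q_eq_minus_1_iff)
qed

lemma combination_pos: "0 < t \<Longrightarrow> t < 1 \<Longrightarrow> k \<in> K \<Longrightarrow> 0 < (1 - t) * y1 k + t * y2 k"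
  using nonneg[of k] pos_sum[of k] by (simp add: convex_combination_pos)

lemma log_sum_has_derivative:
  assumes "0 < t" "t < 1"
  shows "(log_sum has_real_derivative
    (\<Sum>k\<in>K. b k * ((y2 k - y1 k) / ((1 - t) * y1 k + t * y2 k)))) (at t)"
  unfolding log_sum_def using combination_pos[OF assms]
  by (intro DERIV_sum) (auto intro!: derivative_eq_intros simp: field_simps)

lemma log_sum_derivative_neg:
  assumes "0 < t" "t < 1"
  shows "(\<Sum>k\<in>K. b k * ((y2 k - y1 k) / ((1 - t) * y1 k + t * y2 k))) < 0"
proof -
  txt \<open>Abel summation: the partial sums of the weights are nonnegative, their total vanishes
    and \<open>\<phi>\<close> is strictly decreasing along the levels.\<close>
  define \<phi> where "\<phi> v = v / (1 + (1 - 2 * t) * v)" for v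
  have "(\<Sum>k\<in>K. b k * ((y2 k - y1 k) / ((1 - t) * y1 k + t * y2 k))) = -2 * (\<Sum>k\<in>K. b k * \<phi> (q k))"
    using log_derivative_normalized_difference[OF pos_sum combination_pos[OF assms]]
    by (simp add: sum_distrib_left \<phi>_def normalized_difference_def mult_ac)
  moreover have "(\<Sum>k\<in>K. b k * \<phi> (q k)) = (\<Sum>i<n. level_weight q K b i * \<phi> (level_values q K ! i))"
    by (rule sum_by_levels[OF finite_K])
  moreover have "0 < (\<Sum>i<n. level_weight q K b i * \<phi> (level_values q K ! i))"
  proof (rule sum_mult_strict_decreasing_pos)
    have "set (level_values q K) \<noteq> {}" using y1_vanishes set_level_values[OF finite_K] by auto
    then show "0 < n" by simp
    show "(\<Sum>i<n. level_weight q K b i) = 0"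
      using sum_by_levels[OF finite_K, of b "\<lambda>_. 1" q] weights_sum_zero by simp
    have "-1 \<le> level_values q K ! i \<and> level_values q K ! i \<le> 1" if "i < n" for i
    proof -
      have "level_values q K ! i \<in> q ` K"
        using that set_level_values[OF finite_K] nth_mem by metis
      then show ?thesis using q_bounds by auto
    qed
    then show "\<phi> (level_values q K ! Suc i) < \<phi> (level_values q K ! i)" if "Suc i < n" for i
      unfolding \<phi>_def using that assms level_values_strict_decreasing[of i "Suc i" q K]
      by (intro moebius_strict_mono) auto
  qed (use partial_sums_nonneg first_weight_pos in auto)
  ultimately show ?thesis by linarith
qed

lemma log_sum_strict_decreasing:
  assumes "0 < s" "s < t" "t < 1"
  shows "log_sum t < log_sum s"
proof (rule DERIV_neg_imp_decreasing_open[OF \<open>s < t\<close>])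
  show "\<exists>y. (log_sum has_real_derivative y) (at x) \<and> y < 0" if "s < x" "x < t" for x
    using log_sum_has_derivative log_sum_derivative_neg that assms by force
  have "isCont log_sum x" if "s \<le> x" "x \<le> t" for x
    using log_sum_has_derivative[THEN DERIV_isCont] that assms by force
  then show "continuous_on {s..t} log_sum" by (intro continuous_at_imp_continuous_on) auto
qed

lemma continuous_on_log_sum: "continuous_on {0<..<1} log_sum"
  using log_sum_has_derivative[THEN DERIV_isCont] by (intro continuous_at_imp_continuous_on) auto

lemma log_sum_at_right_0: "filterlim log_sum at_top (at_right 0)"
  unfolding log_sum_def using nonneg pos_sum last_weight_neg weight_y1_vanishing
  by (intro log_combination_at_right_0[OF finite_K]) auto

lemma log_sum_at_left_1: "filterlim log_sum at_bot (at_left 1)"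
proof -
  have "filterlim (\<lambda>s. \<Sum>k\<in>K. - b k * ln ((1 - s) * y2 k + s * y1 k)) at_top (at_right 0)"
    using nonneg pos_sum first_weight_pos weight_y2_vanishing
    by (intro log_combination_at_right_0[OF finite_K]) (auto simp: add.commute sum_negf)
  then have "filterlim (\<lambda>s. - log_sum (1 - s)) at_top (at_right 0)"
    by (simp add: log_sum_def sum_negf algebra_simps)
  then have "filterlim (\<lambda>s. log_sum (1 - s)) at_bot (at_right 0)"
    by (simp add: filterlim_uminus_at_bot)
  moreover have "filterlim (\<lambda>t. 1 - t) (at_right 0) (at_left (1::real))"
    by (rule tendsto_imp_filterlim_at_right)
      (auto intro!: tendsto_eq_intros simp: eventually_at_left_field intro: exI[of _ 0])
  ultimately have "filterlim (\<lambda>t. log_sum (1 - (1 - t))) at_bot (at_left 1)"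
    by (rule filterlim_compose)
  then show ?thesis by simp
qed

lemma log_sum_eq_ex1: "\<exists>!t. 0 < t \<and> t < 1 \<and> log_sum t = C"
proof -
  obtain t where "0 < t" "t < 1" "log_sum t = C"
    using IVT_at_top_at_bot[OF _ continuous_on_log_sum log_sum_at_right_0 log_sum_at_left_1] by auto
  moreover have "t' = t" if "0 < t'" "t' < 1" "log_sum t' = C" for t'
  proof (rule ccontr)
    assume "t' \<noteq> t"
    then show False
      using log_sum_strict_decreasing[of t t'] log_sum_strict_decreasing[of t' t]
        that \<open>0 < t\<close> \<open>t < 1\<close> \<open>log_sum t = C\<close>
      by (auto simp: neq_iff)
  qed
  ultimately show ?thesis by blast
qed

end

lemma log_segment_equation_ex1:
  fixes K :: "'a set" and y1 y2 b :: "'a \<Rightarrow> real"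
  defines "w \<equiv> level_weight (normalized_difference y1 y2) K b"
    and "n \<equiv> length (level_values (normalized_difference y1 y2) K)"
  assumes "finite K" and "\<And>k. k \<in> K \<Longrightarrow> 0 \<le> y1 k \<and> 0 \<le> y2 k"
    and "\<And>k. k \<in> K \<Longrightarrow> 0 < y1 k + y2 k"
    and "\<exists>k\<in>K. y1 k = 0" and "\<exists>k\<in>K. y2 k = 0" and "(\<Sum>k\<in>K. b k) = 0"
    and partial_sums: "(\<forall>i < n - 1. 0 \<le> (\<Sum>i'\<le>i. w i')) \<or> (\<forall>i < n - 1. (\<Sum>i'\<le>i. w i') \<le> 0)"
    and end_weights: "w 0 * w (n - 1) < 0"
  shows "\<exists>!t. 0 < t \<and> t < 1 \<and> (\<Sum>k\<in>K. b k * ln ((1 - t) * y1 k + t * y2 k)) = C"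
proof -
  have "n - 1 \<noteq> 0"
    using end_weights by (metis not_square_less_zero)
  consider "0 < w 0" "w (n - 1) < 0" | "w 0 < 0" "0 < w (n - 1)"
    using end_weights by (auto simp: mult_less_0_iff)
  then show ?thesis
  proof cases
    case 1
    then have "\<forall>i < n - 1. 0 \<le> (\<Sum>i'\<le>i. w i')"
      using partial_sums \<open>n - 1 \<noteq> 0\<close> by force
    with 1 interpret log_segment K y1 y2 b
      using assms by unfold_locales (auto simp: w_def n_def)
    show ?thesis using log_sum_eq_ex1 by (simp add: log_sum_def)
  next
    case 2
    txt \<open>Replacing \<open>b\<close> and \<open>C\<close> by their negatives reduces to the first case.\<close>
    then have "\<forall>i < n - 1. (\<Sum>i'\<le>i. w i') \<le> 0"
      using partial_sums \<open>n - 1 \<noteq> 0\<close> by force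
    with 2 interpret log_segment K y1 y2 "\<lambda>k. - b k"
      using assms by unfold_locales (auto simp: w_def n_def level_weight_uminus sum_negf)
    show ?thesis using log_sum_eq_ex1[of "- C"] by (simp add: log_sum_def sum_negf)
  qed
qed

section \<open>The polytopes \<open>P\<^sub>j\<close> and their closures\<close>

lemma Pj_subset_Pbar: "Pj A cl j \<subseteq> Pbar A cl j"
  unfolding Pj_def Pbar_def by (auto simp: le_less)

lemma Pbar_positive_imp_Pj: "y \<in> Pbar A cl j \<Longrightarrow> (\<forall>i. cl i = j \<longrightarrow> 0 < y $ i) \<Longrightarrow> y \<in> Pj A cl j"
  unfolding Pj_def Pbar_def by auto

lemma Pbar_affine_combination:
  assumes "x \<in> Pbar A cl j" "y \<in> Pbar A cl j"
    and "\<forall>i. cl i = j \<longrightarrow> 0 \<le> ((1 - u) *\<^sub>R x + u *\<^sub>R y) $ i"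
  shows "(1 - u) *\<^sub>R x + u *\<^sub>R y \<in> Pbar A cl j"
proof -
  have "(\<Sum>i\<in>{i. cl i = j}. ((1 - u) *\<^sub>R x + u *\<^sub>R y) $ i) =
      (1 - u) * (\<Sum>i\<in>{i. cl i = j}. x $ i) + u * (\<Sum>i\<in>{i. cl i = j}. y $ i)"
    by (simp add: sum.distrib sum_distrib_left)
  then show ?thesis using assms
    by (auto simp: Pbar_def blockvecs_def matrix_vector_right_distrib matrix_vector_mult_scaleR)
qed

lemma convex_Pbar: "convex (Pbar A cl j)"
proof (rule convexI)
  fix x y and u v :: real
  assume xy: "x \<in> Pbar A cl j" "y \<in> Pbar A cl j" and "0 \<le> u" "0 \<le> v" "u + v = 1"
  then have "u = 1 - v" "\<forall>i. cl i = j \<longrightarrow> 0 \<le> ((1 - v) *\<^sub>R x + v *\<^sub>R y) $ i"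
    by (auto simp: Pbar_def)
  then show "u *\<^sub>R x + v *\<^sub>R y \<in> Pbar A cl j"
    using Pbar_affine_combination[OF xy] by simp
qed

lemma compact_Pbar: "compact (Pbar A cl j)"
proof -
  have "bounded (Pbar A cl j)"
    unfolding bounded_iff
  proof (intro exI ballI)
    fix y assume y: "y \<in> Pbar A cl j"
    have "\<bar>y $ i\<bar> \<le> 1" for i
    proof (cases "cl i = j")
      case True
      have "y $ i \<le> (\<Sum>k\<in>{k. cl k = j}. y $ k)"
        by (rule member_le_sum) (use True y in \<open>auto simp: Pbar_def\<close>)
      then show ?thesis using True y by (simp add: Pbar_def)
    qed (use y in \<open>simp add: Pbar_def blockvecs_def\<close>)
    then have "(\<Sum>i\<in>UNIV. \<bar>y $ i\<bar>) \<le> (\<Sum>i\<in>(UNIV :: 'a set). 1)" by (intro sum_mono)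
    with norm_le_l1_cart[of y] show "norm y \<le> real CARD('a)" by simp
  qed
  moreover have "closed (Pbar A cl j)"
  proof -
    have "Pbar A cl j = (\<Inter>i\<in>{i. cl i \<noteq> j}. {y. y $ i = 0}) \<inter> {y. A *v y = 0}
        \<inter> (\<Inter>i\<in>{i. cl i = j}. {y. 0 \<le> y $ i}) \<inter> {y. (\<Sum>i\<in>{i. cl i = j}. y $ i) = 1}"
      unfolding Pbar_def blockvecs_def by auto
    then show ?thesis
      by (simp only:) (intro closed_Int closed_INT ballI closed_Collect_eq closed_Collect_le
          continuous_on_sum continuous_on_component continuous_on_id continuous_on_const
          matrix_vector_mult_linear_continuous_on)
  qed
  ultimately show ?thesis by (simp add: compact_eq_bounded_closed)
qed

lemma Pj_nonempty:
  assumes "surj cl" and ker_decomp: "\<forall>y. A *v y = 0 \<longleftrightarrow> (\<forall>j. A *v restr cl j y = 0)"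
    and "\<exists>y. A *v y = 0 \<and> (\<forall>i. 0 < y $ i)"
  shows "Pj A cl j \<noteq> {}"
proof -
  obtain y where y: "A *v y = 0" "\<forall>i. 0 < y $ i" using assms(3) by blast
  obtain i0 where "cl i0 = j" using \<open>surj cl\<close> by (metis surjD)
  define s where "s = (\<Sum>i\<in>{i. cl i = j}. y $ i)"
  have "0 < s" unfolding s_def
    by (rule sum_pos2[of _ i0]) (use y(2) \<open>cl i0 = j\<close> in \<open>auto intro: less_imp_le\<close>)
  have "(\<Sum>i\<in>{i. cl i = j}. ((1 / s) *\<^sub>R restr cl j y) $ i) = 1"
    using \<open>0 < s\<close> by (simp add: restr_def s_def sum_divide_distrib[symmetric])
  moreover have "A *v restr cl j y = 0" using ker_decomp y(1) by blast
  ultimately have "(1 / s) *\<^sub>R restr cl j y \<in> Pj A cl j"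
    using y \<open>0 < s\<close> by (auto simp: Pj_def blockvecs_def restr_def matrix_vector_mult_scaleR)
  then show ?thesis by blast
qed

lemma Pbar_subset_affine_hull_Pj:
  assumes "Pj A cl j \<noteq> {}"
  shows "Pbar A cl j \<subseteq> affine hull (Pj A cl j)"
proof
  fix x assume x: "x \<in> Pbar A cl j"
  obtain p where p: "p \<in> Pj A cl j" using assms by auto
  define m where "m = (1/2) *\<^sub>R x + (1/2) *\<^sub>R p"
  have "m \<in> Pbar A cl j"
    unfolding m_def using x subsetD[OF Pj_subset_Pbar p] by (intro convexD[OF convex_Pbar]) auto
  moreover have "\<forall>i. cl i = j \<longrightarrow> 0 < m $ i"
    using x p by (auto simp: m_def Pbar_def Pj_def add_nonneg_pos)
  ultimately have "m \<in> Pj A cl j" by (rule Pbar_positive_imp_Pj)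
  then have "2 *\<^sub>R m + (-1) *\<^sub>R p \<in> affine hull (Pj A cl j)"
    using p by (intro mem_affine[OF affine_affine_hull] hull_inc) auto
  moreover have "x = 2 *\<^sub>R m + (-1) *\<^sub>R p" by (simp add: m_def vec_eq_iff)
  ultimately show "x \<in> affine hull (Pj A cl j)" by simp
qed

lemma Pbar_closed_segment:
  assumes "Pj A cl j \<noteq> {}" and "aff_dim (Pj A cl j) = 1"
  obtains y1 y2 where "y1 \<noteq> y2" "Pbar A cl j = closed_segment y1 y2"
proof -
  have "Pbar A cl j \<noteq> {}" using assms(1) Pj_subset_Pbar[of A cl j] by blast
  moreover have "collinear (Pbar A cl j)"
    using aff_dim_subset[OF Pbar_subset_affine_hull_Pj[OF assms(1)]] assms(2)
    by (simp add: collinear_aff_dim)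
  ultimately obtain y1 y2 where seg: "Pbar A cl j = closed_segment y1 y2"
    by (rule compact_convex_collinear_segment[OF _ compact_Pbar convex_Pbar])
  have "y1 \<noteq> y2"
  proof
    assume "y1 = y2"
    then have "aff_dim (Pj A cl j) \<le> aff_dim {y1}"
      using seg Pj_subset_Pbar[of A cl j] by (intro aff_dim_subset) auto
    then show False using assms(2) by simp
  qed
  then show thesis using seg by (rule that)
qed

lemma Pbar_segment_endpoint_vanishes:
  assumes seg: "Pbar A cl j = closed_segment y1 y2" and "y1 \<noteq> y2"
  shows "\<exists>k. cl k = j \<and> y2 $ k = 0"
proof (rule ccontr)
  txt \<open>Otherwise the segment could be prolonged beyond \<open>y\<^sub>2\<close> inside \<open>Pbar A cl j\<close>.\<close>
  assume "\<not> ?thesis"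
  then have pos: "\<forall>k. cl k = j \<longrightarrow> 0 < y2 $ k" using seg by (force simp: Pbar_def)
  define z where "z e = (1 - (1 + e)) *\<^sub>R y1 + (1 + e) *\<^sub>R y2" for e
  have "\<forall>\<^sub>F e in at_right 0. \<forall>k. cl k = j \<longrightarrow> 0 < z e $ k"
  proof (rule eventually_all_finite)
    fix k
    have "((\<lambda>e. z e $ k) \<longlongrightarrow> y2 $ k) (at_right 0)"
      unfolding z_def by (auto intro!: tendsto_eq_intros)
    then show "\<forall>\<^sub>F e in at_right 0. cl k = j \<longrightarrow> 0 < z e $ k"
      using pos by (cases "cl k = j") (auto intro: order_tendstoD)
  qed
  then obtain e where "0 < e" and e: "\<forall>k. cl k = j \<longrightarrow> 0 < z e $ k"
    unfolding eventually_at_right_field by (metis dense)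
  have "y1 \<in> Pbar A cl j" "y2 \<in> Pbar A cl j" using seg by auto
  moreover have "\<forall>k. cl k = j \<longrightarrow> 0 \<le> z e $ k" using e by (auto intro: less_imp_le)
  ultimately have "z e \<in> Pbar A cl j"
    unfolding z_def by (rule Pbar_affine_combination)
  then have "z e \<in> closed_segment y1 y2" using seg by simp
  then obtain v where "v \<le> 1" and v: "z e = (1 - v) *\<^sub>R y1 + v *\<^sub>R y2"
    by (auto simp: closed_segment_image_interval)
  have "1 + e = v"
    by (rule inj_onD[OF inj_segment[OF \<open>y1 \<noteq> y2\<close>, of UNIV] v[unfolded z_def]]) simp_all
  then show False using \<open>0 < e\<close> \<open>v \<le> 1\<close> by simp
qed

lemma ex1_in_image:
  assumes "inj_on f S" and "\<exists>!x. x \<in> S \<and> P (f x)"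
  shows "\<exists>!y. y \<in> f ` S \<and> P y"
  using assms by (auto dest: inj_onD)

lemma Pbar_segment_sum_pos:
  assumes seg: "Pbar A cl j = closed_segment y1 y2" and "Pj A cl j \<noteq> {}" and "cl k = j"
  shows "0 < y1 $ k + y2 $ k"
proof -
  obtain p where p: "p \<in> Pj A cl j" using assms(2) by blast
  then have "p \<in> closed_segment y1 y2" using subsetD[OF Pj_subset_Pbar p] seg by simp
  then obtain u where "p = (1 - u) *\<^sub>R y1 + u *\<^sub>R y2" by (auto simp: closed_segment_image_interval)
  then have p_k: "p $ k = (1 - u) * y1 $ k + u * y2 $ k" by simp
  have "0 < p $ k" using p \<open>cl k = j\<close> by (simp add: Pj_def)
  have "0 \<le> y1 $ k" "0 \<le> y2 $ k" using seg \<open>cl k = j\<close> by (auto simp: Pbar_def)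
  show ?thesis
  proof (rule ccontr)
    assume "\<not> 0 < y1 $ k + y2 $ k"
    then have "y1 $ k = 0" "y2 $ k = 0" using \<open>0 \<le> y1 $ k\<close> \<open>0 \<le> y2 $ k\<close> by linarith+
    then show False using \<open>0 < p $ k\<close> p_k by simp
  qed
qed

lemma Pj_eq_open_segment:
  assumes seg: "Pbar A cl j = closed_segment y1 y2" and "y1 \<noteq> y2" and "Pj A cl j \<noteq> {}"
  shows "Pj A cl j = open_segment y1 y2"
proof
  show "Pj A cl j \<subseteq> open_segment y1 y2"
  proof
    fix y assume y: "y \<in> Pj A cl j"
    have seg': "Pbar A cl j = closed_segment y2 y1" using seg by (metis closed_segment_commute)
    obtain k1 where "cl k1 = j" "y1 $ k1 = 0"
      using Pbar_segment_endpoint_vanishes[OF seg' \<open>y1 \<noteq> y2\<close>[symmetric]] by blast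
    moreover obtain k2 where "cl k2 = j" "y2 $ k2 = 0"
      using Pbar_segment_endpoint_vanishes[OF seg \<open>y1 \<noteq> y2\<close>] by blast
    ultimately have "y \<noteq> y1" "y \<noteq> y2" using y by (auto simp: Pj_def)
    moreover have "y \<in> closed_segment y1 y2" using subsetD[OF Pj_subset_Pbar y] seg by simp
    ultimately show "y \<in> open_segment y1 y2" by (simp add: open_segment_def)
  qed
  show "open_segment y1 y2 \<subseteq> Pj A cl j"
  proof
    fix y assume "y \<in> open_segment y1 y2"
    then obtain u where u: "0 < u" "u < 1" "y = (1 - u) *\<^sub>R y1 + u *\<^sub>R y2"
      using \<open>y1 \<noteq> y2\<close> by (auto simp: open_segment_image_interval)
    have "y \<in> Pbar A cl j" using open_closed_segment[OF \<open>y \<in> open_segment y1 y2\<close>] seg by simp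
    moreover have "0 < y $ k" if "cl k = j" for k
      using u convex_combination_pos[of "y1 $ k" "y2 $ k" u] that seg
        Pbar_segment_sum_pos[OF seg \<open>Pj A cl j \<noteq> {}\<close> that]
      by (auto simp: Pbar_def)
    ultimately show "y \<in> Pj A cl j" by (simp add: Pbar_positive_imp_Pj)
  qed
qed

lemma sign_cond_iff_level_weights:
  fixes cl :: "'m::finite \<Rightarrow> 'k" and j :: 'k and y1 y2 b :: "real^'m"
  defines "w \<equiv> level_weight (normalized_difference (($) y1) (($) y2)) {k. cl k = j} (($) b)"
    and "n \<equiv> length (level_values (normalized_difference (($) y1) (($) y2)) {k. cl k = j})"
  shows "sign_cond cl j y1 y2 b \<longleftrightarrow>
    ((\<forall>i < n - 1. 0 \<le> (\<Sum>i'\<le>i. w i')) \<or> (\<forall>i < n - 1. (\<Sum>i'\<le>i. w i') \<le> 0)) \<and> w 0 * w (n - 1) < 0"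
  by (simp add: sign_cond_def Let_def w_def n_def level_weight_def level_values_def
      normalized_difference_def[abs_def])

lemma Pj_log_equation_ex1:
  assumes seg: "Pbar A cl j = closed_segment y1 y2" and "y1 \<noteq> y2" and "Pj A cl j \<noteq> {}"
    and "b \<in> Kj B cl j" and "sign_cond cl j y1 y2 b"
  shows "\<exists>!y. y \<in> Pj A cl j \<and> (\<Sum>k\<in>{k. cl k = j}. b $ k * ln (y $ k)) = C"
proof -
  define Y where "Y t = (1 - t) *\<^sub>R y1 + t *\<^sub>R y2" for t
  have "\<exists>!t. 0 < t \<and> t < 1 \<and> (\<Sum>k\<in>{k. cl k = j}. b $ k * ln ((1 - t) * y1 $ k + t * y2 $ k)) = C"
  proof (rule log_segment_equation_ex1)
    show "0 \<le> y1 $ k \<and> 0 \<le> y2 $ k" if "k \<in> {k. cl k = j}" for k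
      using seg that by (auto simp: Pbar_def)
    show "0 < y1 $ k + y2 $ k" if "k \<in> {k. cl k = j}" for k
      using Pbar_segment_sum_pos[OF seg \<open>Pj A cl j \<noteq> {}\<close>] that by simp
    have seg': "Pbar A cl j = closed_segment y2 y1" using seg by (metis closed_segment_commute)
    show "\<exists>k\<in>{k. cl k = j}. y1 $ k = 0"
      using Pbar_segment_endpoint_vanishes[OF seg' \<open>y1 \<noteq> y2\<close>[symmetric]] by simp
    show "\<exists>k\<in>{k. cl k = j}. y2 $ k = 0"
      using Pbar_segment_endpoint_vanishes[OF seg \<open>y1 \<noteq> y2\<close>] by simp
    show "(\<Sum>k\<in>{k. cl k = j}. b $ k) = 0" using \<open>b \<in> Kj B cl j\<close> by (simp add: Kj_def)
  qed (use \<open>sign_cond cl j y1 y2 b\<close> sign_cond_iff_level_weights[of cl j y1 y2 b] in simp_all)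
  then have "\<exists>!t. t \<in> {0<..<1} \<and> (\<Sum>k\<in>{k. cl k = j}. b $ k * ln (Y t $ k)) = C"
    by (simp add: Y_def)
  moreover have "inj_on Y {0<..<1}"
    unfolding Y_def[abs_def] by (rule inj_segment[OF \<open>y1 \<noteq> y2\<close>])
  ultimately have "\<exists>!y. y \<in> Y ` {0<..<1} \<and> (\<Sum>k\<in>{k. cl k = j}. b $ k * ln (y $ k)) = C"
    by (intro ex1_in_image)
  moreover have "Pj A cl j = Y ` {0<..<1}"
    using Pj_eq_open_segment[OF assms(1-3)] \<open>y1 \<noteq> y2\<close>
    by (simp add: open_segment_image_interval Y_def)
  ultimately show ?thesis by simp
qed

section \<open>The monomial dependency subspace\<close>

definition log_coords :: "real^'m::finite \<Rightarrow> real^'m" where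
  "log_coords y = (\<chi> i. ln (y $ i))"

lemma monom_eq_exp_inner:
  assumes "\<forall>i. 0 < y $ i"
  shows "monom y z = exp (log_coords y \<bullet> z)"
proof -
  have "y $ i \<noteq> 0" for i using assms by (metis less_irrefl)
  then have "monom y z = (\<Prod>i\<in>UNIV. exp (ln (y $ i) * z $ i))"
    unfolding monom_def by (simp add: powr_def mult.commute)
  then show ?thesis by (simp add: exp_sum inner_vec_def log_coords_def)
qed

lemma inner_blockvec:
  assumes "z \<in> blockvecs cl j"
  shows "w \<bullet> z = (\<Sum>k\<in>{k. cl k = j}. w $ k * z $ k)"
  unfolding inner_vec_def inner_real_def
  by (rule sum.mono_neutral_right) (use assms in \<open>auto simp: blockvecs_def\<close>)

lemma inner_log_coords_restr:
  assumes "z \<in> blockvecs cl j"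
  shows "log_coords (restr cl j y) \<bullet> z = log_coords y \<bullet> z"
  using assms by (simp add: inner_blockvec log_coords_def restr_def)

lemma restr_blockvec: "y \<in> blockvecs cl j \<Longrightarrow> restr cl j y = y"
  unfolding restr_def blockvecs_def by (auto simp: vec_eq_iff)

lemma restr_other_blockvec: "y \<in> blockvecs cl i \<Longrightarrow> i \<noteq> j \<Longrightarrow> restr cl j y = 0"
  unfolding restr_def blockvecs_def by (auto simp: vec_eq_iff)

lemma linear_restr: "linear (restr cl j)"
  unfolding linear_iff restr_def by (auto simp: vec_eq_iff)

lemma vec_eq_iff_restr: "x = y \<longleftrightarrow> (\<forall>j. restr cl j x = restr cl j y)"
  by (auto simp: vec_eq_iff restr_def)

lemma independent_blockvecs:
  assumes block: "\<And>j. j \<in> J \<Longrightarrow> g j \<in> blockvecs cl j" and nonzero: "\<And>j. j \<in> J \<Longrightarrow> g j \<noteq> 0"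
  shows "independent (g ` J)" and "inj_on g J"
proof -
  show "inj_on g J"
  proof (rule inj_onI, rule ccontr)
    fix i j assume "i \<in> J" "j \<in> J" "g i = g j" "i \<noteq> j"
    then have "restr cl j (g i) = 0" using restr_other_blockvec[OF block] by blast
    then have "restr cl j (g j) = 0" using \<open>g i = g j\<close> by simp
    then show False using restr_blockvec[OF block[OF \<open>j \<in> J\<close>]] nonzero[OF \<open>j \<in> J\<close>] by simp
  qed
  show "independent (g ` J)"
    unfolding dependent_def
  proof clarify
    fix j assume j: "j \<in> J" and "g j \<in> span (g ` J - {g j})"
    then have "restr cl j (g j) \<in> restr cl j ` span (g ` J - {g j})" by blast
    then have "restr cl j (g j) \<in> span (restr cl j ` (g ` J - {g j}))"
      by (simp only: span_linear_image[OF linear_restr])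
    moreover have "restr cl j ` (g ` J - {g j}) \<subseteq> {0}"
    proof
      fix x assume "x \<in> restr cl j ` (g ` J - {g j})"
      then obtain i where "i \<in> J" "g i \<noteq> g j" "x = restr cl j (g i)" by blast
      moreover have "i \<noteq> j" using \<open>g i \<noteq> g j\<close> by blast
      ultimately show "x \<in> {0}" using restr_other_blockvec[OF block] by simp
    qed
    ultimately have "restr cl j (g j) \<in> span {0}" using span_mono by blast
    then have "g j \<in> span {0}" using restr_blockvec[OF block[OF j]] by simp
    then show False using nonzero[OF j] by simp
  qed
qed

lemma subspace_dim_1_obtain:
  assumes "subspace S" "dim S = 1"
  obtains b where "b \<noteq> 0" "span {b} = S"
proof -
  obtain Bs where Bs: "Bs \<subseteq> S" "independent Bs" "S \<subseteq> span Bs" "card Bs = 1"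
    using basis_exists[of S] assms(2) by metis
  then obtain b where "Bs = {b}" by (metis card_1_singletonE)
  then have "b \<noteq> 0" "span {b} = S"
    using Bs span_minimal[OF _ assms(1), of "{b}"] by auto
  then show thesis by (rule that)
qed

lemma subspace_Kj: "subspace (Kj B cl j)"
  unfolding subspace_def Kj_def blockvecs_def
  by (auto simp: matrix_vector_right_distrib matrix_vector_mult_scaleR sum.distrib
      sum_distrib_left[symmetric])

lemma subspace_Dsp: "subspace (Dsp B cl)"
  unfolding subspace_def Dsp_def
  by (auto simp: matrix_vector_right_distrib matrix_vector_mult_scaleR sum.distrib
      sum_distrib_left[symmetric])

lemma Kj_subset_Dsp: "Kj B cl j \<subseteq> Dsp B cl"
proof
  fix z assume z: "z \<in> Kj B cl j"
  have "(\<Sum>i\<in>{i. cl i = j'}. z $ i) = 0" for j'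
    using z by (cases "j' = j") (auto simp: Kj_def blockvecs_def intro: sum.neutral)
  then show "z \<in> Dsp B cl" using z by (simp add: Dsp_def Kj_def)
qed

lemma span_generators_eq_Dsp:
  fixes B :: "real^'m::finite^'n::finite" and cl :: "'m \<Rightarrow> 'k::finite"
  assumes dim_sum: "dim (Dsp B cl) = (\<Sum>j\<in>UNIV. dim (Kj B cl j))"
    and dim_le: "\<And>j. dim (Kj B cl j) \<le> 1"
    and gen: "\<And>j. dim (Kj B cl j) = 1 \<Longrightarrow> g j \<noteq> 0 \<and> span {g j} = Kj B cl j"
  shows "span (g ` {j. dim (Kj B cl j) = 1}) = Dsp B cl"
proof -
  define J where "J = {j. dim (Kj B cl j) = 1}"
  have gK: "g j \<in> Kj B cl j" and nonzero: "g j \<noteq> 0" if "j \<in> J" for j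
    using gen span_base[of "g j" "{g j}"] that by (auto simp: J_def)
  then have block: "g j \<in> blockvecs cl j" if "j \<in> J" for j
    using that unfolding Kj_def by blast
  have "dim (Kj B cl j) = (if j \<in> J then 1 else 0)" for j
  proof (cases "j \<in> J")
    case True
    then have "dim (Kj B cl j) = 1" by (simp add: J_def)
    then show ?thesis using True by simp
  next
    case False
    then have "dim (Kj B cl j) \<noteq> 1" by (simp add: J_def)
    then show ?thesis unfolding if_not_P[OF False] using dim_le[of j] by linarith
  qed
  then have "dim (Dsp B cl) = card J"
    unfolding dim_sum by (simp add: sum.If_cases)
  also have "\<dots> = card (g ` J)"
    by (rule card_image[symmetric], rule independent_blockvecs(2)[OF block nonzero])
  finally have "dim (Dsp B cl) \<le> card (g ` J)" by simp
  moreover have "g ` J \<subseteq> Dsp B cl" using subsetD[OF Kj_subset_Dsp gK] by blast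
  moreover have "independent (g ` J)" by (rule independent_blockvecs(1)[OF block nonzero])
  ultimately have "Dsp B cl \<subseteq> span (g ` J)" by (intro card_ge_dim_independent)
  moreover have "span (g ` J) \<subseteq> Dsp B cl"
    using span_minimal[OF \<open>g ` J \<subseteq> Dsp B cl\<close> subspace_Dsp] .
  ultimately show ?thesis unfolding J_def by (rule antisym[rotated])
qed

lemma Kj_generators:
  fixes B :: "real^'m::finite^'n::finite" and cl :: "'m \<Rightarrow> 'k"
  obtains g where "\<And>j. dim (Kj B cl j) = 1 \<Longrightarrow> g j \<noteq> 0 \<and> span {g j} = Kj B cl j"
proof -
  have "\<exists>b. dim (Kj B cl j) = 1 \<longrightarrow> b \<noteq> 0 \<and> span {b} = Kj B cl j" for j
  proof (cases "dim (Kj B cl j) = 1")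
    case True
    then obtain b where "b \<noteq> 0" "span {b} = Kj B cl j"
      by (rule subspace_dim_1_obtain[OF subspace_Kj])
    then show ?thesis by blast
  qed simp
  then have "\<exists>g. \<forall>j. dim (Kj B cl j) = 1 \<longrightarrow> g j \<noteq> 0 \<and> span {g j} = Kj B cl j"
    by (intro choice allI)
  then show thesis using that by blast
qed

lemma coeff_polytope_positive:
  assumes "y \<in> coeff_polytope A cl"
  shows "0 < y $ i"
proof -
  have "restr cl (cl i) y \<in> Pj A cl (cl i)" using assms by (simp add: coeff_polytope_def)
  then show ?thesis by (simp add: Pj_def restr_def)
qed

lemma Ysol_iff_generators:
  assumes "span G = Dsp B cl" "\<forall>i. 0 < c $ i"
  shows "y \<in> Ysol A B cl c \<longleftrightarrow>
    y \<in> coeff_polytope A cl \<and> (\<forall>z\<in>G. log_coords y \<bullet> z = log_coords c \<bullet> z)"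
proof (cases "y \<in> coeff_polytope A cl")
  case True
  have monom_iff: "monom y z = monom c z \<longleftrightarrow> log_coords y \<bullet> z = log_coords c \<bullet> z" for z
    using coeff_polytope_positive[OF True] assms(2) by (simp add: monom_eq_exp_inner)
  have span_eq: "log_coords y \<bullet> z = log_coords c \<bullet> z"
    if "z \<in> span G" and G: "\<forall>z\<in>G. log_coords y \<bullet> z = log_coords c \<bullet> z" for z
  proof -
    have "orthogonal (log_coords y - log_coords c) z"
      by (rule orthogonal_to_span[OF that(1)])
        (use G in \<open>simp add: orthogonal_def inner_diff_left\<close>)
    then show ?thesis by (simp add: orthogonal_def inner_diff_left)
  qed
  have "y \<in> Ysol A B cl c \<longleftrightarrow> (\<forall>z\<in>Dsp B cl. log_coords y \<bullet> z = log_coords c \<bullet> z)"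
    using True by (simp add: Ysol_def monom_iff)
  also have "\<dots> \<longleftrightarrow> (\<forall>z\<in>G. log_coords y \<bullet> z = log_coords c \<bullet> z)"
    using assms(1) span_superset[of G] span_eq by blast
  finally show ?thesis using True by blast
qed (simp add: Ysol_def)

lemma Ysol_iff_block_conditions:
  assumes span: "span (g ` {j. dim (Kj B cl j) = 1}) = Dsp B cl" and "\<forall>i. 0 < c $ i"
    and gen: "\<And>j. dim (Kj B cl j) = 1 \<Longrightarrow> span {g j} = Kj B cl j"
  shows "y \<in> Ysol A B cl c \<longleftrightarrow> y \<in> coeff_polytope A cl \<and>
    (\<forall>j. dim (Kj B cl j) = 1 \<longrightarrow> log_coords (restr cl j y) \<bullet> g j = log_coords c \<bullet> g j)"
proof -
  have "log_coords (restr cl j y) \<bullet> g j = log_coords y \<bullet> g j" if "dim (Kj B cl j) = 1" for j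
  proof (rule inner_log_coords_restr)
    show "g j \<in> blockvecs cl j"
      using gen[OF that] span_base[of "g j" "{g j}"] by (auto simp: Kj_def)
  qed
  then show ?thesis
    using Ysol_iff_generators[OF span \<open>\<forall>i. 0 < c $ i\<close>, of y A] by auto
qed

lemma coeff_polytope_ex1:
  assumes "\<And>j. \<exists>!w. w \<in> Pj A cl j \<and> Q j w"
  shows "\<exists>!y. y \<in> coeff_polytope A cl \<and> (\<forall>j. Q j (restr cl j y))"
proof -
  define W where "W j = (THE w. w \<in> Pj A cl j \<and> Q j w)" for j
  have W: "W j \<in> Pj A cl j \<and> Q j (W j)" for j
    unfolding W_def by (rule theI'[OF assms])
  define y where "y = (\<chi> i. W (cl i) $ i)"
  have "W j \<in> blockvecs cl j" for j using W[of j] by (simp add: Pj_def)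
  then have restr_y: "restr cl j y = W j" for j
    by (auto simp: vec_eq_iff restr_def y_def blockvecs_def)
  then have "y \<in> coeff_polytope A cl \<and> (\<forall>j. Q j (restr cl j y))"
    using W by (simp add: coeff_polytope_def)
  moreover have "y' = y" if "y' \<in> coeff_polytope A cl \<and> (\<forall>j. Q j (restr cl j y'))" for y'
  proof -
    have "W j = restr cl j y'" for j
      unfolding W_def by (rule the1_equality[OF assms]) (use that in \<open>simp add: coeff_polytope_def\<close>)
    then have "\<forall>j. restr cl j y' = restr cl j y" by (simp add: restr_y)
    then show ?thesis using vec_eq_iff_restr[of y' y cl] by blast
  qed
  ultimately show ?thesis by (rule ex1I)
qed

lemma Pj_ex1_class_condition:
  fixes A :: "real^'m::finite^'l::finite" and B :: "real^'m^'n::finite" and cl :: "'m \<Rightarrow> 'k"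
  assumes "Pj A cl j \<noteq> {}"
    and dims: "int (dim (Kj B cl j)) = aff_dim (Pj A cl j)" "aff_dim (Pj A cl j) \<le> 1"
    and sign: "dim (Kj B cl j) = 1 \<Longrightarrow> \<forall>y1 y2 b. y1 \<noteq> y2 \<and> Pbar A cl j = closed_segment y1 y2 \<and>
      span {b} = Kj B cl j \<longrightarrow> sign_cond cl j y1 y2 b"
    and gen: "dim (Kj B cl j) = 1 \<Longrightarrow> span {g} = Kj B cl j"
  shows "\<exists>!w. w \<in> Pj A cl j \<and> (dim (Kj B cl j) = 1 \<longrightarrow> log_coords w \<bullet> g = C)"
proof (cases "dim (Kj B cl j) = 1")
  case True
  then have "aff_dim (Pj A cl j) = 1" using dims(1) by simp
  then obtain y1 y2 where "y1 \<noteq> y2" and seg: "Pbar A cl j = closed_segment y1 y2"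
    using Pbar_closed_segment[OF assms(1)] by blast
  have "g \<in> span {g}" by (rule span_base) simp
  then have "g \<in> Kj B cl j" using gen[OF True] by simp
  moreover have "sign_cond cl j y1 y2 g" using sign[OF True] gen[OF True] \<open>y1 \<noteq> y2\<close> seg by blast
  ultimately have "\<exists>!w. w \<in> Pj A cl j \<and> (\<Sum>k\<in>{k. cl k = j}. g $ k * ln (w $ k)) = C"
    using Pj_log_equation_ex1[OF seg \<open>y1 \<noteq> y2\<close> assms(1)] by blast
  moreover have "log_coords w \<bullet> g = (\<Sum>k\<in>{k. cl k = j}. g $ k * ln (w $ k))" for w
  proof -
    have "g \<in> blockvecs cl j" using \<open>g \<in> Kj B cl j\<close> by (simp add: Kj_def)
    then show ?thesis by (simp add: inner_blockvec log_coords_def mult.commute)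
  qed
  ultimately show ?thesis using True by simp
next
  case False
  then have "aff_dim (Pj A cl j) = 0" using dims by linarith
  then obtain a where "Pj A cl j = {a}" by (auto simp: aff_dim_eq_0)
  then show ?thesis using False by auto
qed

theorem theorem4:
  fixes A :: "real^'m::finite^'l::finite" and B :: "real^'m^'n::finite"
    and cl :: "'m \<Rightarrow> 'k::finite"
  assumes classes_nonempty: "surj cl"
    and ker_decomp: "\<forall>y. A *v y = 0 \<longleftrightarrow> (\<forall>j. A *v restr cl j y = 0)"
    and hyp_i: "\<exists>y. A *v y = 0 \<and> (\<forall>i. 0 < y $ i)"
    and hyp_ii: "dim (Dsp B cl) = (\<Sum>j\<in>UNIV. dim (Kj B cl j))"
    and hyp_iii: "\<forall>j. int (dim (Kj B cl j)) = aff_dim (Pj A cl j) \<and> aff_dim (Pj A cl j) \<le> 1 \<and>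
        (dim (Kj B cl j) = 1 \<longrightarrow>
          (\<forall>y1 y2 b. y1 \<noteq> y2 \<and> Pbar A cl j = closed_segment y1 y2 \<and> span {b} = Kj B cl j
                      \<longrightarrow> sign_cond cl j y1 y2 b))"
  shows "\<forall>c. (\<forall>i. 0 < c $ i) \<longrightarrow> card (Ysol A B cl c) = 1"
proof (intro allI impI)
  fix c :: "real^'m" assume "\<forall>i. 0 < c $ i"
  obtain g where gen: "\<And>j. dim (Kj B cl j) = 1 \<Longrightarrow> g j \<noteq> 0 \<and> span {g j} = Kj B cl j"
    using Kj_generators[of B cl] by blast
  have dims: "int (dim (Kj B cl j)) = aff_dim (Pj A cl j)" "aff_dim (Pj A cl j) \<le> 1" for j
    using hyp_iii by blast+
  then have "dim (Kj B cl j) \<le> 1" for j by (metis of_nat_le_1_iff order_trans)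
  then have span_g: "span (g ` {j. dim (Kj B cl j) = 1}) = Dsp B cl"
    by (rule span_generators_eq_Dsp[OF hyp_ii _ gen])
  have "\<exists>!w. w \<in> Pj A cl j \<and>
      (dim (Kj B cl j) = 1 \<longrightarrow> log_coords w \<bullet> g j = log_coords c \<bullet> g j)" for j
    using Pj_nonempty[OF classes_nonempty ker_decomp hyp_i] dims hyp_iii gen[of j]
    by (intro Pj_ex1_class_condition) auto
  then have "\<exists>!y. y \<in> coeff_polytope A cl \<and>
      (\<forall>j. dim (Kj B cl j) = 1 \<longrightarrow> log_coords (restr cl j y) \<bullet> g j = log_coords c \<bullet> g j)"
    by (rule coeff_polytope_ex1)
  then have "\<exists>!y. y \<in> Ysol A B cl c"
    using Ysol_iff_block_conditions[OF span_g \<open>\<forall>i. 0 < c $ i\<close>] gen by (simp only:) blast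
  then obtain y where "Ysol A B cl c = {y}" by blast
  then show "card (Ysol A B cl c) = 1" by simp
qed

end
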